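(* Consider user $m$ of cluster $\text{C}_2$ in the RIS-partitioned downlink system described in the context, with uncorrelated RIS channels $\mathbf{R}_{\text{RIS}}=\mathbf{I}_N$ (i.i.d. Rayleigh fading). Let $\gamma_m^*$ be its target rate, $\rho=P/\sigma^2$ the transmit SNR, and define $y=\frac{2^{\gamma_m^*}-1}{\rho}$, $\mu_1=\sqrt{L_m^{\text{RIS}}}\,N_m\frac{\sqrt{\pi}}{2}$, $s_1^2=L_m^{\text{RIS}}N_m\frac{4-\pi}{4}$, and $s_2^2=0.5\,(2^{\gamma_m^*}-1)\big(L_m^{\text{RIS}}(N-N_m)+L_m^{\text{BS}}\big)$. Then the outage probability $P_m^{\text{out}}=P(R_m<\gamma_m^* )$ is given by $$P^{\text{out}}_m=1-Q_{\frac{1}{2}}\!\left(\frac{\mu_1}{s_1},\sqrt{\frac{y}{s_1^2}}\right)+\left(\frac{s_2^2}{s_1^2+s_2^2}\right)^{\frac{1}{2}}\exp\!\left(\frac{y}{2s_2^2}\right)\exp\!\left(-\frac{\mu_1^2}{2(s_1^2+s_2^2)}\right)Q_{\frac{1}{2}}\!\left(\frac{\mu_1}{s_1}\sqrt{\frac{s_2^2}{s_1^2+s_2^2}},\sqrt{\frac{y(s_1^2+s_2^2)}{s_1^2s_2^2}}\right),$$ where $Q_k(a,b)$ denotes the $k$-th order generalized Marcum $Q$-function.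
   Context: System model: a single-antenna base station (BS) with transmit power $P$ and an RIS with $N$ reflecting elements serve single-antenna users; the users in cluster $\text{C}_2$ (users $m=1,\dots,M_2$, inside the RIS field of view) are served via the RIS. The RIS is partitioned into $M_2$ disjoint sub-surfaces, sub-surface $i$ having $N_i$ elements, $\sum_{i=1}^{M_2}N_i=N$, and sub-surface $i$ is dedicated to user $i$. The channel from element $n$ of sub-surface $i$ to user $m$ is $\sqrt{L_m^{\text{RISg}}}\,g_{i,m}^{(n)}$ with $g_{i,m}^{(n)}=\beta_{i,m}^{(n)}e^{-j\phi_{i,m}^{(n)}}$; under the uncorrelated assumption the $g_{i,m}^{(n)}$ are i.i.d. $\mathcal{CN}(0,1)$ (so $\beta_{i,m}^{(n)}$ are Rayleigh). The BS–RIS channel is pure LoS with path gain $L^{\text{RISh}}$ and phases $\psi^{(n)}$; $L_m^{\text{RIS}}=L^{\text{RISh}}L_m^{\text{RISg}}$. The direct BS–user-$m$ channel is $v_m\sim\mathcal{CN}(0,L_m^{\text{BS}})$, independent of the RIS channels. Element $n$ of sub-surface $i$ applies phase $\Phi_i^{(n)}=\phi_{i,i}^{(n)}+\psi^{(n)}+\theta_i+\theta_{M_1}$, where $\theta_i$ is the PSK symbol of user $i$ and $\theta_{M_1}$ is the phase of the unit-modulus BS signal. Writing $\bar\Phi_i^{(n)}=-\phi_{i,m}^{(n)}+\Phi_i^{(n)}$, user $m$ has signal power $A_m=\big|\sqrt{L_m^{\text{RIS}}}\sum_{n=1}^{N_m}\beta_{m,m}^{(n)}\big|^2$, interference $I_m=|I_{\text{RIS}}+v_m|^2$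 with $I_{\text{RIS}}=\sqrt{L_m^{\text{RIS}}}\sum_{i\ne m}\sum_{n=1}^{N_i}\beta_{i,m}^{(n)}e^{j\bar\Phi_i^{(n)}}$, and $\text{SINR}_m=\frac{A_m}{I_m+1/\rho}$ where $\rho=P/\sigma^2$ and $\sigma^2$ is the noise variance. The rate is $R_m=\log_2(1+\text{SINR}_m)$.
   Formalization: The signal amplitude $\sqrt{L_m^{\text{RIS}}}\sum_{n=1}^{N_m}\beta_{m,m}^{(n)}$ is replaced by an exactly Gaussian variable with mean $\mu_1$ and variance $s_1^2$, independent of $I_{\text{RIS}}$ and $v_m$, whose square is $A_m$. Apart from conventions, each condition added here is assumed in the paper as well or is needed for the statement above to hold. *)

theory Defs
  imports "HOL-Probability.Probability"
begin

definition bessel_I :: "real \<Rightarrow> real \<Rightarrow> real" where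
  "bessel_I nu x = (\<Sum>m. (x / 2) powr (2 * real m + nu) / (fact m * Gamma (real m + nu + 1)))"

definition marcumQ :: "real \<Rightarrow> real \<Rightarrow> real \<Rightarrow> real" where
  "marcumQ k a b = (1 / a powr (k - 1)) *
     (LINT x:{b..}|lborel. x powr k * exp (-(x\<^sup>2 + a\<^sup>2) / 2) * bessel_I (k - 1) (a * x))"

text \<open>Circularly-symmetric complex Gaussian CN(0,v): real and imaginary parts independent
  N(0, v/2); for v = 0 the degenerate distribution concentrated at 0.\<close>
definition CN_distributed :: "'a measure \<Rightarrow> ('a \<Rightarrow> complex) \<Rightarrow> real \<Rightarrow> bool" where
  "CN_distributed M Z v \<longleftrightarrow>
     (if v = 0 then Z \<in> borel_measurable M \<and> (AE \<omega> in M. Z \<omega> = 0)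
      else distributed M lborel (\<lambda>\<omega>. Re (Z \<omega>)) (normal_density 0 (sqrt (v / 2))) \<and>
           distributed M lborel (\<lambda>\<omega>. Im (Z \<omega>)) (normal_density 0 (sqrt (v / 2))) \<and>
           prob_space.indep_var M borel (\<lambda>\<omega>. Re (Z \<omega>)) borel (\<lambda>\<omega>. Im (Z \<omega>)))"

text \<open>Parameters of Proposition 1 (LRIS = L_m^RIS, LBS = L_m^BS, Nm = N_m).\<close>
definition mu1 :: "real \<Rightarrow> nat \<Rightarrow> real" where
  "mu1 LRIS Nm = sqrt LRIS * real Nm * sqrt pi / 2"

definition s1sq :: "real \<Rightarrow> nat \<Rightarrow> real" where
  "s1sq LRIS Nm = LRIS * real Nm * (4 - pi) / 4"

definition s2sq :: "real \<Rightarrow> real \<Rightarrow> nat \<Rightarrow> nat \<Rightarrow> real \<Rightarrow> real" where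
  "s2sq LRIS LBS N Nm g = 0.5 * (2 powr g - 1) * (LRIS * (real N - real Nm) + LBS)"

definition yval :: "real \<Rightarrow> real \<Rightarrow> real" where
  "yval g rho = (2 powr g - 1) / rho"

end

theory Submission
  imports Defs
begin

(* Write Z = I_RIS + v_m. As a sum of independent circularly-symmetric Gaussians, Z is
   CN(0, V) with V = L_m^RIS (N - N_m) + L_m^BS, so |Z|^2 is exponential with mean V:
   P(|Z|^2 > c) = exp (- max 0 c / V). Outage means X^2 - y < (2^gamma - 1) |Z|^2, and since
   X is independent of Z, conditioning on X = x gives the outage probability
   exp (- max 0 (x^2 - y) / (2 s_2^2)). Integrating this against the normal density of X,
   the region x^2 <= y contributes 1 - P(X^2 > y), while on x^2 > y the normal density times
   exp (- x^2 / (2 s_2^2)) is again a multiple of a normal density. Both Gaussian tails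
   P(X'^2 > y) are Marcum Q-functions of order 1/2: since I_{-1/2}(z) = sqrt (2 / (pi z)) cosh z,
   Q_{1/2}(a, b) is the folded normal tail P(|a + N(0,1)| > b). *)

section \<open>The Marcum Q-function of order one half\<close>

lemma Gamma_of_nat_plus_half:
  "4 ^ m * fact m * Gamma (real m + 1/2) = sqrt pi * fact (2 * m)"
proof (induction m)
  case 0
  then show ?case by (simp add: Gamma_one_half_real)
next
  case (Suc m)
  have "real m + 1/2 \<notin> \<int>\<^sub>\<le>\<^sub>0"
    using nonpos_Ints_nonpos[of "real m + 1/2"] by force
  then have "Gamma (real (Suc m) + 1/2) = (real m + 1/2) * Gamma (real m + 1/2)"
    using Gamma_plus1[of "real m + 1/2"] by (simp add: add_ac)
  then have "4 ^ Suc m * fact (Suc m) * Gamma (real (Suc m) + 1/2)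
      = 4 * (real m + 1) * (real m + 1/2) * (4 ^ m * fact m * Gamma (real m + 1/2))"
    by (simp add: algebra_simps)
  also have "\<dots> = sqrt pi * fact (2 * Suc m)"
    unfolding Suc.IH by (simp add: algebra_simps)
  finally show ?case .
qed

lemma cosh_even_sums: "(\<lambda>m. z ^ (2 * m) / fact (2 * m)) sums cosh (z :: real)"
proof -
  have "(\<lambda>n. (\<lambda>n. if even n then z ^ n /\<^sub>R fact n else 0) (2 * n)) sums cosh z
        \<longleftrightarrow> (\<lambda>n. if even n then z ^ n /\<^sub>R fact n else 0) sums cosh z"
    by (rule sums_mono_reindex) (auto simp: strict_mono_def elim!: evenE)
  then show ?thesis
    using cosh_converges[of z] by (simp add: divide_inverse mult.commute)
qed

lemma bessel_I_minus_half:
  assumes "z > 0"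
  shows "bessel_I (- (1/2)) z = sqrt (2 / (pi * z)) * cosh z"
proof -
  have term_eq: "(z / 2) powr (2 * real m + - (1/2)) / (fact m * Gamma (real m + - (1/2) + 1))
        = (z / 2) powr (- (1/2)) / sqrt pi * (z ^ (2 * m) / fact (2 * m))" for m
  proof -
    have "(z / 2) powr (2 * real m + - (1/2)) = (z / 2) powr (- (1/2) + real (2 * m))"
      by (simp add: add.commute)
    also have "\<dots> = (z / 2) powr (- (1/2)) * (z / 2) ^ (2 * m)"
      using assms by (simp only: powr_add powr_realpow half_gt_zero)
    also have "(z / 2) ^ (2 * m) = z ^ (2 * m) / 4 ^ m"
      by (simp add: power_mult power_divide)
    finally have powr_eq:
      "(z / 2) powr (2 * real m + - (1/2)) = (z / 2) powr (- (1/2)) * (z ^ (2 * m) / 4 ^ m)" .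
    have "real m + - (1/2) + 1 = real m + 1/2"
      by simp
    then have Gamma_eq: "Gamma (real m + - (1/2) + 1) = sqrt pi * fact (2 * m) / (4 ^ m * fact m)"
      using Gamma_of_nat_plus_half[of m] by (simp add: eq_divide_eq ac_simps)
    show ?thesis
      unfolding powr_eq Gamma_eq by (simp add: field_simps)
  qed
  have "(\<lambda>m. (z / 2) powr (2 * real m + - (1/2)) / (fact m * Gamma (real m + - (1/2) + 1)))
      sums ((z / 2) powr (- (1/2)) / sqrt pi * cosh z)"
    unfolding term_eq by (intro sums_mult cosh_even_sums)
  then have "bessel_I (- (1/2)) z = (z / 2) powr (- (1/2)) / sqrt pi * cosh z"
    unfolding bessel_I_def by (rule sums_unique[symmetric])
  also have "(z / 2) powr (- (1/2)) / sqrt pi = sqrt (2 / (pi * z))"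
    using assms by (simp add: powr_minus_divide powr_half_sqrt real_sqrt_divide real_sqrt_mult)
  finally show ?thesis .
qed

lemma marcumQ_half:
  assumes a: "a > 0" and b: "b > 0"
  shows "marcumQ (1/2) a b
       = (\<integral>x. indicator {b..} x * (normal_density a 1 x + normal_density (-a) 1 x) \<partial>lborel)"
proof -
  have integrand: "sqrt a * (x powr (1/2) * exp (-(x\<^sup>2 + a\<^sup>2) / 2) * bessel_I (- (1/2)) (a * x))
      = normal_density a 1 x + normal_density (-a) 1 x" if x: "x > 0" for x
  proof -
    have "sqrt a * sqrt x * sqrt (2 / (pi * (a * x))) = sqrt (a * x * (2 / (pi * (a * x))))"
      by (simp only: real_sqrt_mult)
    also have "\<dots> = sqrt 2 / sqrt pi"
      using a x by (simp add: real_sqrt_divide)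
    finally have sqrt_eq: "sqrt a * sqrt x * sqrt (2 / (pi * (a * x))) = sqrt 2 / sqrt pi" .
    have cosh_eq: "exp (-(x\<^sup>2 + a\<^sup>2) / 2) * cosh (a * x)
        = (exp (-(x - a)\<^sup>2 / 2) + exp (-(x - -a)\<^sup>2 / 2)) / 2"
      by (simp add: cosh_field_def mult_exp_exp power2_eq_square field_simps)
    have "sqrt a * (x powr (1/2) * exp (-(x\<^sup>2 + a\<^sup>2) / 2) * bessel_I (- (1/2)) (a * x))
        = (sqrt a * sqrt x * sqrt (2 / (pi * (a * x)))) * (exp (-(x\<^sup>2 + a\<^sup>2) / 2) * cosh (a * x))"
      using bessel_I_minus_half[of "a * x"] a x by (simp add: powr_half_sqrt mult_ac)
    also have "\<dots> = sqrt 2 / sqrt pi * ((exp (-(x - a)\<^sup>2 / 2) + exp (-(x - -a)\<^sup>2 / 2)) / 2)"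
      unfolding sqrt_eq cosh_eq ..
    also have "\<dots> = normal_density a 1 x + normal_density (-a) 1 x"
      by (simp add: normal_density_def real_sqrt_mult field_simps) (simp flip: mult.assoc)
    finally show ?thesis .
  qed
  have "marcumQ (1/2) a b = (LINT x:{b..}|lborel.
      sqrt a * (x powr (1/2) * exp (-(x\<^sup>2 + a\<^sup>2) / 2) * bessel_I (- (1/2)) (a * x)))"
    using a unfolding marcumQ_def
    by (simp add: set_integral_mult_right powr_minus_divide powr_half_sqrt)
  also have "\<dots> = (\<integral>x. indicator {b..} x * (normal_density a 1 x + normal_density (-a) 1 x) \<partial>lborel)"
    unfolding set_lebesgue_integral_def
  proof (intro Bochner_Integration.integral_cong refl)
    fix x
    show "indicator {b..} x *\<^sub>R
          (sqrt a * (x powr (1/2) * exp (-(x\<^sup>2 + a\<^sup>2) / 2) * bessel_I (- (1/2)) (a * x)))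
        = indicator {b..} x * (normal_density a 1 x + normal_density (-a) 1 x)"
      using integrand[of x] b by (cases "b \<le> x") auto
  qed
  finally show ?thesis .
qed

lemma integral_normal_density_abs_gt:
  assumes a: "a > 0" and b: "b > 0"
  shows "(\<integral>u. normal_density a 1 u * indicator {u. b < \<bar>u\<bar>} u \<partial>lborel) = marcumQ (1/2) a b"
proof -
  have integrable: "integrable lborel (\<lambda>u. normal_density c 1 u * indicator A u)"
    if "A \<in> sets borel" for c A
    using that by (intro integrable_real_mult_indicator) auto
  have "(\<integral>u. normal_density a 1 u * indicator {..<-b} u \<partial>lborel)
      = (\<integral>u. normal_density a 1 (-u) * indicator {..<-b} (-u) \<partial>lborel)"
    using lborel_integral_real_affine[of "-1" "\<lambda>u. normal_density a 1 u * indicator {..<-b} u" 0]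
    by simp
  also have "\<dots> = (\<integral>u. normal_density (-a) 1 u * indicator {b<..} u \<partial>lborel)"
    by (intro Bochner_Integration.integral_cong)
      (auto simp: normal_density_def power2_eq_square algebra_simps indicator_def)
  finally have reflect: "(\<integral>u. normal_density a 1 u * indicator {..<-b} u \<partial>lborel)
      = (\<integral>u. normal_density (-a) 1 u * indicator {b<..} u \<partial>lborel)" .
  have "(\<integral>u. normal_density a 1 u * indicator {u. b < \<bar>u\<bar>} u \<partial>lborel)
      = (\<integral>u. normal_density a 1 u * indicator {b<..} u
             + normal_density a 1 u * indicator {..<-b} u \<partial>lborel)"
    using b by (intro Bochner_Integration.integral_cong) (auto simp: indicator_def)
  also have "\<dots> = (\<integral>u. normal_density a 1 u * indicator {b<..} u
             + normal_density (-a) 1 u * indicator {b<..} u \<partial>lborel)"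
    by (simp add: Bochner_Integration.integral_add integrable reflect)
  also have "\<dots> = (\<integral>u. indicator {b..} u * (normal_density a 1 u + normal_density (-a) 1 u) \<partial>lborel)"
    using AE_lborel_singleton[of b]
    by (intro integral_cong_AE) (auto elim!: eventually_mono simp: indicator_def)
  also have "\<dots> = marcumQ (1/2) a b"
    using marcumQ_half[OF a b] by simp
  finally show ?thesis .
qed

lemma integral_normal_density_square_gt:
  assumes \<sigma>: "\<sigma> > 0" and \<mu>: "\<mu> > 0" and y: "y > 0"
  shows "(\<integral>x. normal_density \<mu> \<sigma> x * indicator {x. y < x\<^sup>2} x \<partial>lborel)
       = marcumQ (1/2) (\<mu> / \<sigma>) (sqrt y / \<sigma>)"
proof -
  have square_gt_iff: "y < (\<sigma> * u)\<^sup>2 \<longleftrightarrow> sqrt y / \<sigma> < \<bar>u\<bar>" for u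
  proof -
    have "y < (\<sigma> * u)\<^sup>2 \<longleftrightarrow> sqrt y < sqrt ((\<sigma> * u)\<^sup>2)"
      by (rule real_sqrt_less_iff[symmetric])
    also have "\<dots> \<longleftrightarrow> sqrt y / \<sigma> < \<bar>u\<bar>"
      using \<sigma> by (simp add: abs_mult pos_divide_less_eq mult.commute)
    finally show ?thesis .
  qed
  have scale: "\<sigma> * normal_density \<mu> \<sigma> (\<sigma> * u) = normal_density (\<mu> / \<sigma>) 1 u" for u
    using \<sigma> by (simp add: normal_density_def real_sqrt_mult power2_eq_square field_simps)
  have "(\<integral>x. normal_density \<mu> \<sigma> x * indicator {x. y < x\<^sup>2} x \<partial>lborel)
      = \<sigma> * (\<integral>u. normal_density \<mu> \<sigma> (\<sigma> * u) * indicator {x. y < x\<^sup>2} (\<sigma> * u) \<partial>lborel)"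
    using \<sigma> lborel_integral_real_affine[of \<sigma>
        "\<lambda>x. normal_density \<mu> \<sigma> x * indicator {x. y < x\<^sup>2} x" 0]
    by simp
  also have "\<dots> = (\<integral>u. \<sigma> * normal_density \<mu> \<sigma> (\<sigma> * u) * indicator {x. y < x\<^sup>2} (\<sigma> * u) \<partial>lborel)"
    by (simp add: mult.assoc)
  also have "\<dots> = (\<integral>u. normal_density (\<mu> / \<sigma>) 1 u * indicator {u. sqrt y / \<sigma> < \<bar>u\<bar>} u \<partial>lborel)"
    unfolding scale by (simp add: indicator_def square_gt_iff)
  also have "\<dots> = marcumQ (1/2) (\<mu> / \<sigma>) (sqrt y / \<sigma>)"
    using \<sigma> \<mu> y by (intro integral_normal_density_abs_gt) auto
  finally show ?thesis .
qed

section \<open>Gaussian integrals\<close>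

lemma normal_density_mult_exp_square:
  assumes a: "a > 0" and b: "b > 0"
  shows "normal_density \<mu> (sqrt a) x * exp (- x\<^sup>2 / (2 * b))
       = sqrt (b / (a + b)) * exp (- \<mu>\<^sup>2 / (2 * (a + b)))
         * normal_density (\<mu> * b / (a + b)) (sqrt (a * b / (a + b))) x"
proof -
  have exponent: "- (x - \<mu>)\<^sup>2 / (2 * a) + - x\<^sup>2 / (2 * b)
      = - \<mu>\<^sup>2 / (2 * d) + - (x - \<mu> * b / d)\<^sup>2 / (2 * (a * b / d))" if d: "d = a + b" for d
    \<comment> \<open>\<open>d\<close> keeps \<open>field_simps\<close> from multiplying out the common denominator \<open>a + b\<close>\<close>
  proof -
    have "d > 0"
      using a b d by simp
    with a b show ?thesis
      by (simp add: field_simps power2_eq_square) (simp add: d algebra_simps)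
  qed
  have factor: "1 / sqrt (2 * pi * a) = sqrt (b / (a + b)) / sqrt (2 * pi * (a * b / (a + b)))"
    using a b by (simp add: real_sqrt_mult real_sqrt_divide field_simps)
  have "normal_density \<mu> (sqrt a) x * exp (- x\<^sup>2 / (2 * b))
      = 1 / sqrt (2 * pi * a) * exp (- (x - \<mu>)\<^sup>2 / (2 * a) + - x\<^sup>2 / (2 * b))"
    using a by (simp add: normal_density_def mult_exp_exp)
  also have "\<dots> = sqrt (b / (a + b)) / sqrt (2 * pi * (a * b / (a + b)))
      * (exp (- \<mu>\<^sup>2 / (2 * (a + b))) * exp (- (x - \<mu> * b / (a + b))\<^sup>2 / (2 * (a * b / (a + b)))))"
    unfolding factor exponent[OF refl] exp_add ..
  also have "\<dots> = sqrt (b / (a + b)) * exp (- \<mu>\<^sup>2 / (2 * (a + b)))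
         * normal_density (\<mu> * b / (a + b)) (sqrt (a * b / (a + b))) x"
    using a b by (simp add: normal_density_def)
  finally show ?thesis .
qed

lemma integral_normal_density_mult_exp_excess_eq_tails:
  fixes a b y :: real
  assumes a: "a > 0" and b: "b > 0"
  defines "I \<equiv> indicator {x. y < x\<^sup>2} :: real \<Rightarrow> real"
  shows "(\<integral>x. normal_density \<mu> (sqrt a) x * exp (- max 0 (x\<^sup>2 - y) / (2 * b)) \<partial>lborel)
    = 1 - (\<integral>x. normal_density \<mu> (sqrt a) x * I x \<partial>lborel)
      + sqrt (b / (a + b)) * exp (y / (2 * b)) * exp (-(\<mu>\<^sup>2) / (2 * (a + b)))
        * (\<integral>x. normal_density (\<mu> * b / (a + b)) (sqrt (a * b / (a + b))) x * I x \<partial>lborel)"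
proof -
  let ?\<phi> = "normal_density \<mu> (sqrt a)"
  let ?\<phi>' = "normal_density (\<mu> * b / (a + b)) (sqrt (a * b / (a + b)))"
  let ?C = "sqrt (b / (a + b)) * exp (y / (2 * b)) * exp (-(\<mu>\<^sup>2) / (2 * (a + b)))"
  have split: "?\<phi> x * exp (- max 0 (x\<^sup>2 - y) / (2 * b)) = ?\<phi> x - ?\<phi> x * I x + ?C * (?\<phi>' x * I x)"
    for x
  proof (cases "y < x\<^sup>2")
    case True
    then have "exp (- max 0 (x\<^sup>2 - y) / (2 * b)) = exp (y / (2 * b)) * exp (- x\<^sup>2 / (2 * b))"
      by (simp add: mult_exp_exp diff_divide_distrib)
    then show ?thesis
      using True normal_density_mult_exp_square[OF a b, of \<mu> x] by (simp add: I_def)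
  qed (simp add: I_def)
  have "{x::real. y < x\<^sup>2} \<in> sets borel"
    by measurable
  then have "integrable lborel ?\<phi>" "integrable lborel (\<lambda>x. ?\<phi> x * I x)"
    "integrable lborel (\<lambda>x. ?\<phi>' x * I x)"
    using a b unfolding I_def
    by (auto intro!: integrable_real_mult_indicator integrable_normal_density)
  then show ?thesis
    unfolding split using a
    by (simp add: integral_normal_density Bochner_Integration.integral_add
        Bochner_Integration.integral_diff Bochner_Integration.integrable_diff)
qed

lemma integral_normal_density_mult_exp_excess:
  assumes a: "a > 0" and b: "b > 0" and \<mu>: "\<mu> > 0" and y: "y > 0"
  shows "(\<integral>x. normal_density \<mu> (sqrt a) x * exp (- max 0 (x\<^sup>2 - y) / (2 * b)) \<partial>lborel)
    = 1 - marcumQ (1/2) (\<mu> / sqrt a) (sqrt (y / a))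
      + (b / (a + b)) powr (1/2) * exp (y / (2 * b)) * exp (-(\<mu>\<^sup>2) / (2 * (a + b)))
        * marcumQ (1/2) (\<mu> / sqrt a * sqrt (b / (a + b))) (sqrt (y * (a + b) / (a * b)))"
proof -
  define q where "q = sqrt (b / (a + b))"
  have q: "q > 0" "q * q = b / (a + b)" "sqrt (a * b / (a + b)) = sqrt a * q"
    using a b by (simp_all add: q_def real_sqrt_mult[symmetric])
  then have "\<mu> * b / (a + b) / sqrt (a * b / (a + b)) = \<mu> * (q * q) / (sqrt a * q)"
    by simp
  then have mean: "\<mu> * b / (a + b) / sqrt (a * b / (a + b)) = \<mu> / sqrt a * sqrt (b / (a + b))"
    using q(1) by (simp add: q_def[symmetric])
  have "y * (a + b) / (a * b) = y / (a * b / (a + b))"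
    by simp
  then have threshold: "sqrt y / sqrt (a * b / (a + b)) = sqrt (y * (a + b) / (a * b))"
    by (simp only: real_sqrt_divide)
  have "(\<integral>x. normal_density (\<mu> * b / (a + b)) (sqrt (a * b / (a + b))) x
      * indicator {x. y < x\<^sup>2} x \<partial>lborel)
      = marcumQ (1/2) (\<mu> / sqrt a * sqrt (b / (a + b))) (sqrt (y * (a + b) / (a * b)))"
    using mean threshold a b \<mu> y by (subst integral_normal_density_square_gt) auto
  moreover have "(\<integral>x. normal_density \<mu> (sqrt a) x * indicator {x. y < x\<^sup>2} x \<partial>lborel)
      = marcumQ (1/2) (\<mu> / sqrt a) (sqrt (y / a))"
    using a \<mu> y by (simp add: integral_normal_density_square_gt real_sqrt_divide)
  ultimately show ?thesis
    unfolding integral_normal_density_mult_exp_excess_eq_tails[OF a b]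
    using a b by (simp add: powr_half_sqrt)
qed

lemma nn_integral_even:
  fixes f :: "real \<Rightarrow> ennreal"
  assumes [measurable]: "f \<in> borel_measurable borel" and even: "\<And>x. f (-x) = f x"
  shows "(\<integral>\<^sup>+x. f x \<partial>lborel) = 2 * (\<integral>\<^sup>+x. f x * indicator {0..} x \<partial>lborel)"
proof -
  have "(\<integral>\<^sup>+x. f x \<partial>lborel)
      = (\<integral>\<^sup>+x. f x * indicator {0..} x \<partial>lborel) + (\<integral>\<^sup>+x. f x * indicator {..<0} x \<partial>lborel)"
    by (subst nn_integral_add[symmetric]) (auto intro!: nn_integral_cong simp: indicator_def)
  also have "(\<integral>\<^sup>+x. f x * indicator {..<0} x \<partial>lborel)
      = (\<integral>\<^sup>+x. f (-x) * indicator {..<0} (-x) \<partial>lborel)"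
    using nn_integral_real_affine[of "\<lambda>x. f x * indicator {..<0} x" "-1" 0] by simp
  also have "\<dots> = (\<integral>\<^sup>+x. f x * indicator {0..} x \<partial>lborel)"
    using AE_lborel_singleton[of 0]
    by (intro nn_integral_cong_AE) (auto elim!: eventually_mono simp: even indicator_def)
  finally show ?thesis
    by (simp add: mult_2)
qed

lemma nn_integral_mult_exp_square_atLeast:
  fixes k r :: real
  assumes k: "k > 0" and r: "r \<ge> 0"
  shows "(\<integral>\<^sup>+u. ennreal (u * exp (- (u\<^sup>2 * k))) * indicator {r..} u \<partial>lborel)
       = ennreal (exp (- (r\<^sup>2 * k)) / (2 * k))"
proof -
  have "((\<lambda>u. - exp (- (u\<^sup>2 * k)) / (2 * k)) \<longlongrightarrow> - 0 / (2 * k)) at_top"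
    using k by (intro tendsto_intros filterlim_compose[OF exp_at_bot]
        filterlim_compose[OF filterlim_uminus_at_bot_at_top]
        filterlim_at_top_mult_tendsto_pos[OF tendsto_const k])
      (auto intro!: filterlim_at_top_mult_at_top[OF filterlim_ident filterlim_ident]
        simp: power2_eq_square)
  then have "(\<integral>\<^sup>+u. ennreal (u * exp (- (u\<^sup>2 * k))) * indicator {r..} u \<partial>lborel)
      = ennreal (0 - (- exp (- (r\<^sup>2 * k)) / (2 * k)))"
    using k r
    by (intro nn_integral_FTC_atLeast) (auto intro!: derivative_eq_intros simp: field_simps)
  then show ?thesis
    by simp
qed

lemma nn_integral_abs_mult_exp_square_gt:
  fixes k c :: real
  assumes k: "k > 0"
  shows "(\<integral>\<^sup>+u. ennreal (\<bar>u\<bar> * exp (- (u\<^sup>2 * k)) * indicator {c<..} (u\<^sup>2 * k)) \<partial>lborel)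
       = ennreal (exp (- max 0 c) / k)"
proof -
  define r where "r = sqrt (max 0 c / k)"
  have r: "r \<ge> 0" "r\<^sup>2 * k = max 0 c"
    using k by (simp_all add: r_def)
  have gt_iff: "c < u\<^sup>2 * k \<longleftrightarrow> r < u" if u: "0 \<le> u" "u \<noteq> r" for u
  proof -
    have "c < u\<^sup>2 * k \<longleftrightarrow> r\<^sup>2 * k < u\<^sup>2 * k"
    proof (cases "c \<ge> 0")
      case False
      then have "r = 0"
        using k r(2) by simp
      moreover have "0 < u\<^sup>2 * k"
        using k u \<open>r = 0\<close> by simp
      ultimately show ?thesis
        using False by simp
    qed (simp add: r(2))
    also have "\<dots> \<longleftrightarrow> r\<^sup>2 < u\<^sup>2"
      using k by simp
    also have "\<dots> \<longleftrightarrow> r < u"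
      using r(1) u(1) by (auto intro: power2_less_imp_less power_strict_mono)
    finally show ?thesis .
  qed
  let ?f = "\<lambda>u. ennreal (\<bar>u\<bar> * exp (- (u\<^sup>2 * k)) * indicator {c<..} (u\<^sup>2 * k))"
  have "integral\<^sup>N lborel ?f = 2 * (\<integral>\<^sup>+u. ?f u * indicator {0..} u \<partial>lborel)"
    by (rule nn_integral_even) auto
  also have "(\<integral>\<^sup>+u. ?f u * indicator {0..} u \<partial>lborel)
      = (\<integral>\<^sup>+u. ennreal (u * exp (- (u\<^sup>2 * k))) * indicator {r..} u \<partial>lborel)"
    using AE_lborel_singleton[of r] r(1)
    by (intro nn_integral_cong_AE) (auto elim!: eventually_mono simp: indicator_def gt_iff)
  also have "\<dots> = ennreal (exp (- max 0 c) / (2 * k))"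
    using k r by (simp add: nn_integral_mult_exp_square_atLeast)
  also have "2 * ennreal (exp (- max 0 c) / (2 * k)) = ennreal (2 * (exp (- max 0 c) / (2 * k)))"
    using k by (subst ennreal_mult) auto
  also have "\<dots> = ennreal (exp (- max 0 c) / k)"
    by simp
  finally show ?thesis .
qed

lemma nn_integral_cauchy_density: "(\<integral>\<^sup>+v. ennreal (1 / (pi * (1 + v\<^sup>2))) \<partial>lborel) = 1"
proof -
  have "(\<integral>\<^sup>+v. ennreal (1 / (pi * (1 + v\<^sup>2))) \<partial>lborel)
      = 2 * (\<integral>\<^sup>+v. ennreal (1 / (pi * (1 + v\<^sup>2))) * indicator {0..} v \<partial>lborel)"
    by (rule nn_integral_even) auto
  also have "(\<integral>\<^sup>+v. ennreal (1 / (pi * (1 + v\<^sup>2))) * indicator {0..} v \<partial>lborel)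
      = ennreal (1/2 - arctan 0 / pi)"
  proof (rule nn_integral_FTC_atLeast)
    have "((\<lambda>v. arctan v / pi) \<longlongrightarrow> (pi / 2) / pi) at_top"
      by (intro tendsto_intros) (simp_all add: tendsto_arctan_at_top)
    then show "((\<lambda>v. arctan v / pi) \<longlongrightarrow> 1/2) at_top"
      by simp
  qed (auto intro!: derivative_eq_intros simp: field_simps add_nonneg_eq_0_iff add_pos_nonneg)
  also have "2 * ennreal (1/2 - arctan 0 / pi) = ennreal (2 * (1/2))"
    by (subst ennreal_mult) auto
  finally show ?thesis
    by simp
qed

lemma nn_integral_exp_norm_gt_substitution:
  fixes L u c :: real
  assumes L: "L > 0" and u: "u \<noteq> 0"
  shows "(\<integral>\<^sup>+w. ennreal (exp (- (u\<^sup>2 + w\<^sup>2) / L) * indicator {w. c < u\<^sup>2 + w\<^sup>2} w) \<partial>lborel)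
       = (\<integral>\<^sup>+v. ennreal (\<bar>u\<bar> * exp (- (u\<^sup>2 * ((1 + v\<^sup>2) / L)))
            * indicator {c / L<..} (u\<^sup>2 * ((1 + v\<^sup>2) / L))) \<partial>lborel)"
proof -
  have "ennreal \<bar>u\<bar> * ennreal (exp (- (u\<^sup>2 + (u * v)\<^sup>2) / L) * indicator {w. c < u\<^sup>2 + w\<^sup>2} (u * v))
      = ennreal (\<bar>u\<bar> * exp (- (u\<^sup>2 * ((1 + v\<^sup>2) / L)))
          * indicator {c / L<..} (u\<^sup>2 * ((1 + v\<^sup>2) / L)))" for v
  proof -
    have scaled: "(u\<^sup>2 + (u * v)\<^sup>2) / L = u\<^sup>2 * ((1 + v\<^sup>2) / L)"
      by (simp add: field_simps power2_eq_square)
    have "c < u\<^sup>2 + (u * v)\<^sup>2 \<longleftrightarrow> c / L < u\<^sup>2 * ((1 + v\<^sup>2) / L)"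
      using L unfolding scaled[symmetric] by (simp add: divide_less_cancel)
    moreover have "- (u\<^sup>2 + (u * v)\<^sup>2) / L = - (u\<^sup>2 * ((1 + v\<^sup>2) / L))"
      by (metis scaled minus_divide_left)
    ultimately show ?thesis
      by (simp add: ennreal_mult[symmetric] indicator_def)
  qed
  then show ?thesis
    using u by (subst nn_integral_real_affine[where c = u and t = 0])
      (auto simp: nn_integral_cmult[symmetric])
qed

lemma nn_integral_normal_density_pair_norm_gt:
  assumes s: "s > 0"
  shows "(\<integral>\<^sup>+u. \<integral>\<^sup>+w. ennreal (normal_density 0 s u * normal_density 0 s w
            * indicator {w. c < u\<^sup>2 + w\<^sup>2} w) \<partial>lborel \<partial>lborel)
       = ennreal (exp (- max 0 c / (2 * s\<^sup>2)))"
proof -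
  define L where "L = 2 * s\<^sup>2"
  have L: "L > 0"
    using s by (simp add: L_def)
  define H where "H u v = ennreal (1 / (pi * L)) * ennreal (\<bar>u\<bar> * exp (- (u\<^sup>2 * ((1 + v\<^sup>2) / L)))
      * indicator {c / L<..} (u\<^sup>2 * ((1 + v\<^sup>2) / L)))" for u v :: real
  have density_product: "normal_density 0 s u * normal_density 0 s w
      = 1 / (pi * L) * exp (- (u\<^sup>2 + w\<^sup>2) / L)" for u w
    using s by (simp add: normal_density_def L_def mult_exp_exp power_divide power_mult_distrib
        add_divide_distrib diff_divide_distrib flip: power2_eq_square)
  have "(\<integral>\<^sup>+w. ennreal (normal_density 0 s u * normal_density 0 s w
      * indicator {w. c < u\<^sup>2 + w\<^sup>2} w) \<partial>lborel) = (\<integral>\<^sup>+v. H u v \<partial>lborel)" if "u \<noteq> 0" for u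
  proof -
    have "(\<integral>\<^sup>+w. ennreal (normal_density 0 s u * normal_density 0 s w
        * indicator {w. c < u\<^sup>2 + w\<^sup>2} w) \<partial>lborel) = (\<integral>\<^sup>+w. ennreal (1 / (pi * L))
          * ennreal (exp (- (u\<^sup>2 + w\<^sup>2) / L) * indicator {w. c < u\<^sup>2 + w\<^sup>2} w) \<partial>lborel)"
      using L by (intro nn_integral_cong) (simp add: density_product ennreal_mult[symmetric])
    also have "\<dots> = ennreal (1 / (pi * L)) * (\<integral>\<^sup>+w. ennreal (exp (- (u\<^sup>2 + w\<^sup>2) / L)
          * indicator {w. c < u\<^sup>2 + w\<^sup>2} w) \<partial>lborel)"
      by (rule nn_integral_cmult) measurable
    also have "\<dots> = (\<integral>\<^sup>+v. H u v \<partial>lborel)"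
      unfolding nn_integral_exp_norm_gt_substitution[OF L that] H_def
      by (rule nn_integral_cmult[symmetric]) measurable
    finally show ?thesis .
  qed
  then have "(\<integral>\<^sup>+u. \<integral>\<^sup>+w. ennreal (normal_density 0 s u * normal_density 0 s w
        * indicator {w. c < u\<^sup>2 + w\<^sup>2} w) \<partial>lborel \<partial>lborel) = (\<integral>\<^sup>+u. \<integral>\<^sup>+v. H u v \<partial>lborel \<partial>lborel)"
    using AE_lborel_singleton[of 0] by (intro nn_integral_cong_AE) (auto elim!: eventually_mono)
  also have "\<dots> = (\<integral>\<^sup>+v. \<integral>\<^sup>+u. H u v \<partial>lborel \<partial>lborel)"
    by (rule lborel_pair.Fubini'[symmetric]) (simp add: H_def split_beta')
  also have "\<dots> = (\<integral>\<^sup>+v. ennreal (exp (- max 0 c / L)) * ennreal (1 / (pi * (1 + v\<^sup>2))) \<partial>lborel)"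
  proof (rule nn_integral_cong)
    fix v :: real
    have k: "(1 + v\<^sup>2) / L > 0"
      using L by (simp add: add_pos_nonneg)
    have "(\<integral>\<^sup>+u. H u v \<partial>lborel)
        = ennreal (1 / (pi * L)) * ennreal (exp (- max 0 (c / L)) / ((1 + v\<^sup>2) / L))"
      unfolding H_def nn_integral_abs_mult_exp_square_gt[OF k, symmetric]
      by (rule nn_integral_cmult) measurable
    also have "\<dots> = ennreal (exp (- max 0 c / L)) * ennreal (1 / (pi * (1 + v\<^sup>2)))"
      using L k by (simp add: ennreal_mult[symmetric] max_divide_distrib_right field_simps)
    finally show "(\<integral>\<^sup>+u. H u v \<partial>lborel)
        = ennreal (exp (- max 0 c / L)) * ennreal (1 / (pi * (1 + v\<^sup>2)))" .
  qed
  also have "\<dots> = ennreal (exp (- max 0 c / (2 * s\<^sup>2)))"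
    by (simp add: nn_integral_cmult nn_integral_cauchy_density L_def)
  finally show ?thesis .
qed

section \<open>Circularly-symmetric complex Gaussians\<close>

lemma (in prob_space) CN_distributed_norm_square_gt:
  assumes Z: "CN_distributed M Z V" and V: "V > 0"
  shows "emeasure M {\<omega> \<in> space M. c < (cmod (Z \<omega>))\<^sup>2} = ennreal (exp (- max 0 c / V))"
proof -
  define s where "s = sqrt (V / 2)"
  have s: "s > 0" "2 * s\<^sup>2 = V"
    using V by (simp_all add: s_def)
  from Z V have Re: "distributed M lborel (\<lambda>\<omega>. Re (Z \<omega>)) (normal_density 0 s)"
    and Im: "distributed M lborel (\<lambda>\<omega>. Im (Z \<omega>)) (normal_density 0 s)"
    and indep: "indep_var borel (\<lambda>\<omega>. Re (Z \<omega>)) borel (\<lambda>\<omega>. Im (Z \<omega>))"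
    unfolding CN_distributed_def s_def by auto
  have joint: "distributed M (lborel \<Otimes>\<^sub>M lborel) (\<lambda>\<omega>. (Re (Z \<omega>), Im (Z \<omega>)))
      (\<lambda>(u, w). ennreal (normal_density 0 s u) * ennreal (normal_density 0 s w))"
    using distributed_joint_indep[OF lborel.sigma_finite_measure_axioms
        lborel.sigma_finite_measure_axioms Re Im]
      indep_var_compose[OF indep, of id lborel id lborel]
    by simp
  define A where "A = {p \<in> space (lborel \<Otimes>\<^sub>M lborel). c < (fst p)\<^sup>2 + (snd p)\<^sup>2}"
  have A: "A \<in> sets (lborel \<Otimes>\<^sub>M lborel)"
    unfolding A_def by measurable
  have "{\<omega> \<in> space M. c < (cmod (Z \<omega>))\<^sup>2} = (\<lambda>\<omega>. (Re (Z \<omega>), Im (Z \<omega>))) -` A \<inter> space M"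
    by (auto simp: A_def cmod_power2 space_pair_measure)
  then have "emeasure M {\<omega> \<in> space M. c < (cmod (Z \<omega>))\<^sup>2}
      = (\<integral>\<^sup>+p. (\<lambda>(u, w). ennreal (normal_density 0 s u) * ennreal (normal_density 0 s w)) p
          * indicator A p \<partial>(lborel \<Otimes>\<^sub>M lborel))"
    using distributed_emeasure[OF joint A] by simp
  also have "\<dots> = (\<integral>\<^sup>+u. \<integral>\<^sup>+w. ennreal (normal_density 0 s u * normal_density 0 s w
      * indicator {w. c < u\<^sup>2 + w\<^sup>2} w) \<partial>lborel \<partial>lborel)"
    using A by (subst lborel.nn_integral_fst[symmetric])
      (auto intro!: nn_integral_cong simp: A_def space_pair_measure ennreal_mult indicator_def)
  also have "\<dots> = ennreal (exp (- max 0 c / V))"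
    using nn_integral_normal_density_pair_norm_gt[OF s(1)] s(2) by simp
  finally show ?thesis .
qed

lemma (in prob_space) indep_var_sum_disjoint:
  fixes F :: "'i \<Rightarrow> 'a \<Rightarrow> 'b::{second_countable_topology, topological_comm_monoid_add}"
  assumes F: "indep_vars (\<lambda>_. borel) F I" and "J \<subseteq> I" "K \<subseteq> I" "J \<inter> K = {}"
  shows "indep_var borel (\<lambda>\<omega>. \<Sum>j\<in>J. F j \<omega>) borel (\<lambda>\<omega>. \<Sum>k\<in>K. F k \<omega>)"
proof -
  have "indep_var borel ((\<lambda>f. \<Sum>j\<in>J. f j) \<circ> (\<lambda>\<omega>. restrict (\<lambda>i. F i \<omega>) J))
      borel ((\<lambda>f. \<Sum>k\<in>K. f k) \<circ> (\<lambda>\<omega>. restrict (\<lambda>i. F i \<omega>) K))"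
    using assms by (intro indep_var_compose[OF indep_var_restrict[OF F]]) measurable
  then show ?thesis
    by (simp add: comp_def cong: sum.cong)
qed

lemma (in prob_space) indep_vars_Re_Im:
  fixes Z1 Z2 :: "'a \<Rightarrow> complex"
  assumes indep: "indep_var borel Z1 borel Z2"
    and indep1: "indep_var borel (\<lambda>\<omega>. Re (Z1 \<omega>)) borel (\<lambda>\<omega>. Im (Z1 \<omega>))"
    and indep2: "indep_var borel (\<lambda>\<omega>. Re (Z2 \<omega>)) borel (\<lambda>\<omega>. Im (Z2 \<omega>))"
  shows "indep_vars (\<lambda>_. borel) (\<lambda>i \<omega>. [Re (Z1 \<omega>), Im (Z1 \<omega>), Re (Z2 \<omega>), Im (Z2 \<omega>)] ! i)
    {0, 1, 2, 3}"
proof -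
  have [measurable]: "Z1 \<in> borel_measurable M" "Z2 \<in> borel_measurable M"
    using indep_var_rv1[OF indep] indep_var_rv2[OF indep] by simp_all
  define G where "G = (\<lambda>i \<omega>. [Re (Z1 \<omega>), Im (Z1 \<omega>), Re (Z2 \<omega>), Im (Z2 \<omega>)] ! i)"
  have "random_variable borel (G i)" if "i \<in> {0, 1, 2, 3}" for i
    using that by (auto simp: G_def)
  then have "indep_vars (\<lambda>_. borel) G {0, 1, 2, 3} \<longleftrightarrow>
      (\<forall>A \<in> (\<Pi> i\<in>{0, 1, 2, 3}. sets borel). prob (\<Inter>j\<in>{0, 1, 2, 3}. G j -` A j \<inter> space M)
        = (\<Prod>j\<in>{0, 1, 2, 3}. prob (G j -` A j \<inter> space M)))"
    by (intro indep_vars_finite)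
      (auto simp: Int_stable_def sets.sigma_sets_eq[of borel, simplified])
  moreover have "prob (\<Inter>j\<in>{0, 1, 2, 3}. G j -` A j \<inter> space M)
      = (\<Prod>j\<in>{0, 1, 2, 3}. prob (G j -` A j \<inter> space M))"
    if A: "A \<in> (\<Pi> i\<in>{0, 1, 2, 3::nat}. sets (borel :: real measure))" for A
  proof -
    have A_sets[measurable]:
      "A 0 \<in> sets borel" "A 1 \<in> sets borel" "A 2 \<in> sets borel" "A 3 \<in> sets borel"
      using A by auto
    define S where "S = {z. Re z \<in> A 0 \<and> Im z \<in> A 1}"
    define T where "T = {z. Re z \<in> A 2 \<and> Im z \<in> A 3}"
    have ST: "S \<in> sets borel" "T \<in> sets borel"
      unfolding S_def T_def by measurable
    have "(\<Inter>j\<in>{0, 1, 2, 3}. G j -` A j \<inter> space M) = (\<lambda>x. (Z1 x, Z2 x)) -` (S \<times> T) \<inter> space M"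
      by (auto simp: G_def S_def T_def)
    then have "prob (\<Inter>j\<in>{0, 1, 2, 3}. G j -` A j \<inter> space M)
        = prob (Z1 -` S \<inter> space M) * prob (Z2 -` T \<inter> space M)"
      using indep_varD[OF indep ST] by simp
    also have "Z1 -` S \<inter> space M = (\<lambda>x. (Re (Z1 x), Im (Z1 x))) -` (A 0 \<times> A 1) \<inter> space M"
      by (auto simp: S_def)
    also have "Z2 -` T \<inter> space M = (\<lambda>x. (Re (Z2 x), Im (Z2 x))) -` (A 2 \<times> A 3) \<inter> space M"
      by (auto simp: T_def)
    finally show ?thesis
      using indep_varD[OF indep1 A_sets(1,2)] indep_varD[OF indep2 A_sets(3,4)]
      by (simp add: G_def mult_ac)
  qed
  ultimately show ?thesis
    unfolding G_def by blast
qed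

lemma distributed_AE_cong:
  assumes "distributed M N X f" "AE \<omega> in M. X \<omega> = Y \<omega>" "Y \<in> measurable M N"
  shows "distributed M N Y f"
proof -
  have "distr M N Y = distr M N X"
    using assms by (intro distr_cong_AE) (auto simp: distributed_def eq_commute)
  then show ?thesis
    using assms unfolding distributed_def by simp
qed

lemma (in prob_space) indep_var_AE_cong:
  assumes indep: "indep_var S X T Y"
    and "AE \<omega> in M. X \<omega> = X' \<omega>" "AE \<omega> in M. Y \<omega> = Y' \<omega>"
    and [measurable]: "X' \<in> measurable M S" "Y' \<in> measurable M T"
  shows "indep_var S X' T Y'"
proof -
  have [measurable]: "X \<in> measurable M S" "Y \<in> measurable M T"
    using indep_var_rv1[OF indep] indep_var_rv2[OF indep] by auto
  have "distr M S X' = distr M S X" "distr M T Y' = distr M T Y"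
    using assms by (auto intro!: distr_cong_AE simp: eq_commute)
  moreover have "distr M (S \<Otimes>\<^sub>M T) (\<lambda>\<omega>. (X' \<omega>, Y' \<omega>)) = distr M (S \<Otimes>\<^sub>M T) (\<lambda>\<omega>. (X \<omega>, Y \<omega>))"
    using assms(2,3) by (intro distr_cong_AE) (auto elim!: eventually_elim2)
  ultimately show ?thesis
    using indep unfolding indep_var_distribution_eq by simp
qed

lemma (in prob_space) CN_distributed_add:
  assumes Z1: "CN_distributed M Z1 v1" "v1 \<ge> 0" and Z2: "CN_distributed M Z2 v2" "v2 > 0"
    and indep: "indep_var borel Z1 borel Z2"
  shows "CN_distributed M (\<lambda>\<omega>. Z1 \<omega> + Z2 \<omega>) (v1 + v2)"
proof -
  have [measurable]: "Z1 \<in> borel_measurable M" "Z2 \<in> borel_measurable M"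
    using indep_var_rv1[OF indep] indep_var_rv2[OF indep] by simp_all
  from Z2 have Re2: "distributed M lborel (\<lambda>\<omega>. Re (Z2 \<omega>)) (normal_density 0 (sqrt (v2 / 2)))"
    and Im2: "distributed M lborel (\<lambda>\<omega>. Im (Z2 \<omega>)) (normal_density 0 (sqrt (v2 / 2)))"
    and indep2: "indep_var borel (\<lambda>\<omega>. Re (Z2 \<omega>)) borel (\<lambda>\<omega>. Im (Z2 \<omega>))"
    unfolding CN_distributed_def by auto
  show ?thesis
  proof (cases "v1 = 0")
    case True
    then have "AE \<omega> in M. Z1 \<omega> = 0"
      using Z1 unfolding CN_distributed_def by auto
    then have "AE \<omega> in M. Re (Z2 \<omega>) = Re (Z1 \<omega> + Z2 \<omega>)" "AE \<omega> in M. Im (Z2 \<omega>) = Im (Z1 \<omega> + Z2 \<omega>)"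
      by (auto elim!: eventually_mono)
    then show ?thesis
      using True Z2(2) distributed_AE_cong[OF Re2] distributed_AE_cong[OF Im2]
        indep_var_AE_cong[OF indep2]
      by (simp add: CN_distributed_def)
  next
    case False
    with Z1 have Re1: "distributed M lborel (\<lambda>\<omega>. Re (Z1 \<omega>)) (normal_density 0 (sqrt (v1 / 2)))"
      and Im1: "distributed M lborel (\<lambda>\<omega>. Im (Z1 \<omega>)) (normal_density 0 (sqrt (v1 / 2)))"
      and indep1: "indep_var borel (\<lambda>\<omega>. Re (Z1 \<omega>)) borel (\<lambda>\<omega>. Im (Z1 \<omega>))"
      unfolding CN_distributed_def by auto
    note components = indep_vars_Re_Im[OF indep indep1 indep2]
    have "indep_var borel (\<lambda>\<omega>. Re (Z1 \<omega>)) borel (\<lambda>\<omega>. Re (Z2 \<omega>))"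
      and "indep_var borel (\<lambda>\<omega>. Im (Z1 \<omega>)) borel (\<lambda>\<omega>. Im (Z2 \<omega>))"
      and "indep_var borel (\<lambda>\<omega>. Re (Z1 \<omega>) + Re (Z2 \<omega>)) borel (\<lambda>\<omega>. Im (Z1 \<omega>) + Im (Z2 \<omega>))"
      using indep_var_sum_disjoint[OF components, of "{0}" "{2}"]
        indep_var_sum_disjoint[OF components, of "{1}" "{3}"]
        indep_var_sum_disjoint[OF components, of "{0, 2}" "{1, 3}"]
      by simp_all
    then show ?thesis
      using False Z1(2) Z2(2) add_indep_normal[OF _ _ _ Re1 Re2] add_indep_normal[OF _ _ _ Im1 Im2]
      by (simp add: CN_distributed_def add_divide_distrib)
  qed
qed

section \<open>Conditioning on the desired signal\<close>

(* indep_var only relates random variables of a common type; the product form of independence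
   below also relates the real X to the complex interference. *)
lemma (in prob_space) indep_var_distr_pair_compose:
  assumes indep: "indep_var S X T Y"
    and [measurable]: "f \<in> measurable S S'" "g \<in> measurable T T'"
  shows "distr M S' (\<lambda>\<omega>. f (X \<omega>)) \<Otimes>\<^sub>M distr M T' (\<lambda>\<omega>. g (Y \<omega>))
       = distr M (S' \<Otimes>\<^sub>M T') (\<lambda>\<omega>. (f (X \<omega>), g (Y \<omega>)))"
proof -
  have [measurable]: "X \<in> measurable M S" "Y \<in> measurable M T"
    using indep_var_rv1[OF indep] indep_var_rv2[OF indep] by auto
  interpret Y': prob_space "distr (distr M T Y) T' g"
    by (intro prob_space.prob_space_distr prob_space_distr) auto
  have "distr M S' (\<lambda>\<omega>. f (X \<omega>)) \<Otimes>\<^sub>M distr M T' (\<lambda>\<omega>. g (Y \<omega>))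
      = distr (distr M S X) S' f \<Otimes>\<^sub>M distr (distr M T Y) T' g"
    by (simp add: distr_distr comp_def)
  also have "\<dots> = distr (distr M S X \<Otimes>\<^sub>M distr M T Y) (S' \<Otimes>\<^sub>M T') (\<lambda>(x, y). (f x, g y))"
    by (rule pair_measure_distr) (auto simp: Y'.sigma_finite_measure_axioms)
  also have "\<dots> = distr M (S' \<Otimes>\<^sub>M T') (\<lambda>\<omega>. (f (X \<omega>), g (Y \<omega>)))"
    using indep by (simp add: indep_var_distribution_eq distr_distr comp_def)
  finally show ?thesis .
qed

lemma (in prob_space) emeasure_Pair_indep_distributed:
  assumes indep: "distr M S X \<Otimes>\<^sub>M distr M T Y = distr M (S \<Otimes>\<^sub>M T) (\<lambda>\<omega>. (X \<omega>, Y \<omega>))"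
    and X: "distributed M S X f" and [measurable]: "Y \<in> measurable M T"
    and A: "A \<in> sets (S \<Otimes>\<^sub>M T)"
  shows "emeasure M {\<omega> \<in> space M. (X \<omega>, Y \<omega>) \<in> A}
       = (\<integral>\<^sup>+x. f x * emeasure M {\<omega> \<in> space M. (x, Y \<omega>) \<in> A} \<partial>S)"
proof -
  have [measurable]: "X \<in> measurable M S" "f \<in> borel_measurable S"
    using distributed_measurable[OF X] distributed_borel_measurable[OF X] by auto
  interpret Y: prob_space "distr M T Y"
    by (rule prob_space_distr) simp
  have "emeasure M {\<omega> \<in> space M. (X \<omega>, Y \<omega>) \<in> A} = emeasure (distr M (S \<Otimes>\<^sub>M T) (\<lambda>\<omega>. (X \<omega>, Y \<omega>))) A"
    using A by (subst emeasure_distr) (auto intro!: arg_cong[where f = "emeasure M"])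
  also have "\<dots> = (\<integral>\<^sup>+x. emeasure (distr M T Y) (Pair x -` A) \<partial>density S f)"
    using A X unfolding indep[symmetric]
    by (subst Y.emeasure_pair_measure_alt) (simp_all add: distributed_distr_eq_density)
  also have "\<dots> = (\<integral>\<^sup>+x. f x * emeasure (distr M T Y) (Pair x -` A) \<partial>S)"
    using A by (intro nn_integral_density Y.measurable_emeasure_Pair) auto
  also have "\<dots> = (\<integral>\<^sup>+x. f x * emeasure M {\<omega> \<in> space M. (x, Y \<omega>) \<in> A} \<partial>S)"
  proof (intro nn_integral_cong)
    fix x
    assume "x \<in> space S"
    then have "emeasure (distr M T Y) (Pair x -` A) = emeasure M (Y -` Pair x -` A \<inter> space M)"
      using A by (simp add: emeasure_distr sets_Pair1)
    also have "Y -` Pair x -` A \<inter> space M = {\<omega> \<in> space M. (x, Y \<omega>) \<in> A}"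
      by auto
    finally show "f x * emeasure (distr M T Y) (Pair x -` A)
        = f x * emeasure M {\<omega> \<in> space M. (x, Y \<omega>) \<in> A}"
      by simp
  qed
  finally show ?thesis .
qed

lemma (in prob_space) prob_normal_square_less_CN_norm_square:
  assumes X: "distributed M lborel X (normal_density \<mu> \<sigma>)" and \<sigma>: "\<sigma> > 0"
    and Z: "CN_distributed M Z V" and V: "V > 0" and t: "t > 0"
    and indep: "indep_var borel (\<lambda>\<omega>. complex_of_real (X \<omega>)) borel Z"
  shows "prob {\<omega> \<in> space M. (X \<omega>)\<^sup>2 - y < t * (cmod (Z \<omega>))\<^sup>2}
       = (\<integral>x. normal_density \<mu> \<sigma> x * exp (- max 0 (x\<^sup>2 - y) / (t * V)) \<partial>lborel)"
proof -
  let ?h = "\<lambda>x. normal_density \<mu> \<sigma> x * exp (- max 0 (x\<^sup>2 - y) / (t * V))"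
  define A where "A = {p \<in> space (lborel \<Otimes>\<^sub>M borel). (fst p)\<^sup>2 - y < t * (cmod (snd p))\<^sup>2}"
  have A: "A \<in> sets (lborel \<Otimes>\<^sub>M borel)"
    unfolding A_def by measurable
  have "distr M lborel X \<Otimes>\<^sub>M distr M borel Z = distr M (lborel \<Otimes>\<^sub>M borel) (\<lambda>\<omega>. (X \<omega>, Z \<omega>))"
    using indep_var_distr_pair_compose[OF indep, of Re lborel "\<lambda>z. z" borel] by simp
  then have "emeasure M {\<omega> \<in> space M. (X \<omega>, Z \<omega>) \<in> A}
      = (\<integral>\<^sup>+x. normal_density \<mu> \<sigma> x * emeasure M {\<omega> \<in> space M. (x, Z \<omega>) \<in> A} \<partial>lborel)"
    using X indep_var_rv2[OF indep] A by (rule emeasure_Pair_indep_distributed)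
  also have "\<dots> = (\<integral>\<^sup>+x. ennreal (?h x) \<partial>lborel)"
  proof (intro nn_integral_cong)
    fix x :: real
    have "{\<omega> \<in> space M. (x, Z \<omega>) \<in> A} = {\<omega> \<in> space M. (x\<^sup>2 - y) / t < (cmod (Z \<omega>))\<^sup>2}"
      using t by (auto simp: A_def space_pair_measure pos_divide_less_eq mult.commute)
    moreover have "max 0 ((x\<^sup>2 - y) / t) / V = max 0 (x\<^sup>2 - y) / (t * V)"
      using t V by (simp add: max_divide_distrib_right)
    ultimately show "normal_density \<mu> \<sigma> x * emeasure M {\<omega> \<in> space M. (x, Z \<omega>) \<in> A} = ennreal (?h x)"
      using CN_distributed_norm_square_gt[OF Z V] by (simp add: ennreal_mult)
  qed
  also have "\<dots> = ennreal (\<integral>x. ?h x \<partial>lborel)"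
  proof (rule nn_integral_eq_integral)
    show "integrable lborel ?h"
      using \<sigma> t V
      by (intro Bochner_Integration.integrable_bound[OF integrable_normal_density[of \<sigma> \<mu>]])
        (auto simp: mult_left_le)
  qed simp
  finally show ?thesis
    by (simp add: A_def space_pair_measure emeasure_eq_measure integral_nonneg)
qed

lemma log_one_plus_div_less_iff:
  assumes rho: "rho > 0" and n: "n \<ge> 0"
  shows "log 2 (1 + x\<^sup>2 / (n + 1 / rho)) < g \<longleftrightarrow> x\<^sup>2 - yval g rho < (2 powr g - 1) * n"
proof -
  have D: "n + 1 / rho > 0"
    using rho n by (simp add: add_nonneg_pos)
  then have "log 2 (1 + x\<^sup>2 / (n + 1 / rho)) < g \<longleftrightarrow> 1 + x\<^sup>2 / (n + 1 / rho) < 2 powr g"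
    by (simp add: log_less_iff add_pos_nonneg)
  also have "\<dots> \<longleftrightarrow> x\<^sup>2 / (n + 1 / rho) < 2 powr g - 1"
    by linarith
  also have "\<dots> \<longleftrightarrow> x\<^sup>2 < (2 powr g - 1) * (n + 1 / rho)"
    using D by (simp add: pos_divide_less_eq mult.commute)
  also have "\<dots> \<longleftrightarrow> x\<^sup>2 - yval g rho < (2 powr g - 1) * n"
    by (simp add: yval_def diff_divide_distrib algebra_simps)
  finally show ?thesis .
qed

theorem proposition1:
  fixes M :: "'a measure" and X :: "'a \<Rightarrow> real" and IR vm :: "'a \<Rightarrow> complex"
    and LRIS LBS rho g :: real and N Nm :: nat
  assumes "prob_space M"
    and "LRIS > 0" and "LBS > 0" and "rho > 0" and "g > 0"
    and "1 \<le> Nm" and "Nm \<le> N"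
    and "distributed M lborel X (normal_density (mu1 LRIS Nm) (sqrt (s1sq LRIS Nm)))"
    and "CN_distributed M IR (LRIS * (real N - real Nm))"
    and "CN_distributed M vm LBS"
    and "prob_space.indep_vars M (\<lambda>_. borel)
           (\<lambda>i \<omega>. [complex_of_real (X \<omega>), IR \<omega>, vm \<omega>] ! i) {0..<3}"
  shows "measure M {\<omega> \<in> space M.
            log 2 (1 + (X \<omega>)\<^sup>2 / ((cmod (IR \<omega> + vm \<omega>))\<^sup>2 + 1 / rho)) < g}
       = (let \<mu> = mu1 LRIS Nm; a = s1sq LRIS Nm; b = s2sq LRIS LBS N Nm g; y = yval g rho in
          1 - marcumQ (1/2) (\<mu> / sqrt a) (sqrt (y / a))
          + (b / (a + b)) powr (1/2) * exp (y / (2 * b)) * exp (-(\<mu>\<^sup>2) / (2 * (a + b)))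
            * marcumQ (1/2) (\<mu> / sqrt a * sqrt (b / (a + b))) (sqrt (y * (a + b) / (a * b))))"
proof -
  interpret prob_space M by fact
  define t where "t = 2 powr g - 1"
  define V where "V = LRIS * (real N - real Nm) + LBS"
  have "t > 0"
    using \<open>g > 0\<close> powr_less_mono[of 0 g 2] by (simp add: t_def)
  have "V > 0"
    using assms(2,3,7) by (simp add: V_def add_nonneg_pos)
  have params: "s1sq LRIS Nm > 0" "s2sq LRIS LBS N Nm g > 0" "mu1 LRIS Nm > 0" "yval g rho > 0"
    and tV: "t * V = 2 * s2sq LRIS LBS N Nm g"
    using assms(2,4,6) \<open>t > 0\<close> \<open>V > 0\<close> pi_less_4
    by (simp_all add: s1sq_def mu1_def yval_def s2sq_def t_def V_def)
  note components = indep_var_sum_disjoint[OF assms(11)]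
  have "CN_distributed M (\<lambda>\<omega>. IR \<omega> + vm \<omega>) V"
    using CN_distributed_add[OF assms(9) _ assms(10) \<open>LBS > 0\<close>] components[of "{1}" "{2}"]
      assms(2,7)
    by (simp add: V_def)
  moreover have "indep_var borel (\<lambda>\<omega>. complex_of_real (X \<omega>)) borel (\<lambda>\<omega>. IR \<omega> + vm \<omega>)"
    using components[of "{0}" "{1, 2}"] by simp
  ultimately have "prob {\<omega> \<in> space M. (X \<omega>)\<^sup>2 - yval g rho < t * (cmod (IR \<omega> + vm \<omega>))\<^sup>2}
      = (\<integral>x. normal_density (mu1 LRIS Nm) (sqrt (s1sq LRIS Nm)) x
           * exp (- max 0 (x\<^sup>2 - yval g rho) / (2 * s2sq LRIS LBS N Nm g)) \<partial>lborel)"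
    unfolding tV[symmetric] using params(1) \<open>t > 0\<close> \<open>V > 0\<close>
    by (intro prob_normal_square_less_CN_norm_square[OF assms(8)]) auto
  also note integral_normal_density_mult_exp_excess[OF params]
  finally show ?thesis
    using assms(4) by (simp add: log_one_plus_div_less_iff t_def Let_def)
qed

end
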